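(* Let $n\ge 2$ and let $\Delta^o(SD_{8n})$ be the order super commuting graph of the semidihedral group $SD_{8n}$. Then the Sombor spectrum of $\Delta^o(SD_{8n})$ consists of $-(8n-1)\sqrt2$ with multiplicity $8n-1$ and $(8n-1)^2\sqrt2$ with multiplicity $1$.
   Context: For a finite simple graph $\Gamma$ with vertices $u_1,\dots,u_N$, the Sombor matrix $S(\Gamma)$ has $(i,j)$ entry $\sqrt{\deg(u_i)^2+\deg(u_j)^2}$ if $u_i,u_j$ are adjacent and $0$ otherwise; the Sombor spectrum is the multiset of its eigenvalues. $SD_{8n}=\langle a,b: a^{4n}=b^2=e,\ ba=a^{2n-1}b\rangle$. The order super commuting graph $\Delta^o(G)$ has vertex set $G$, and distinct $g,h$ are adjacent iff $o(g)=o(h)$ or there exist distinct $g',h'\in G$ with $o(g')=o(g)$, $o(h')=o(h)$ and $g'h'=h'g'$; here $o(x)$ is the order of $x$. *)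

theory Defs
  imports "HOL-Algebra.Multiplicative_Group" "Jordan_Normal_Form.Char_Poly"
    "HOL-Computational_Algebra.Polynomial"
begin

text \<open>Concrete model of the semidihedral group
  SD_{8n} = <a, b | a^{4n} = b^2 = e, b a = a^{2n-1} b>.
  The pair (i, j) with i < 4n, j < 2 represents a^i b^j.
  Since b a^k = a^{k(2n-1)} b, we have
  (a^i b^j)(a^k b^l) = a^{i + k (2n-1)^j} b^{j+l}.\<close>

definition SD :: "nat \<Rightarrow> (nat \<times> nat) monoid" where
  "SD n = \<lparr> carrier = {(i, j). i < 4 * n \<and> j < 2},
            monoid.mult = (\<lambda>(i, j) (k, l). ((i + k * (2 * n - 1) ^ j) mod (4 * n), (j + l) mod 2)),
            monoid.one = (0, 0) \<rparr>"

definition order_super_commuting_adj :: "('a, 'b) monoid_scheme \<Rightarrow> 'a \<Rightarrow> 'a \<Rightarrow> bool" where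
  "order_super_commuting_adj G g h \<longleftrightarrow>
     g \<in> carrier G \<and> h \<in> carrier G \<and> g \<noteq> h \<and>
     (group.ord G g = group.ord G h \<or>
      (\<exists>g' \<in> carrier G. \<exists>h' \<in> carrier G. g' \<noteq> h' \<and>
         group.ord G g' = group.ord G g \<and> group.ord G h' = group.ord G h \<and>
         g' \<otimes>\<^bsub>G\<^esub> h' = h' \<otimes>\<^bsub>G\<^esub> g'))"

definition graph_degree :: "'a set \<Rightarrow> ('a \<Rightarrow> 'a \<Rightarrow> bool) \<Rightarrow> 'a \<Rightarrow> nat" where
  "graph_degree V E u = card {v \<in> V. E u v}"

definition sombor_matrix :: "'a set \<Rightarrow> ('a \<Rightarrow> 'a \<Rightarrow> bool) \<Rightarrow> 'a list \<Rightarrow> real mat" where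
  "sombor_matrix V E vs = mat (length vs) (length vs) (\<lambda>(i, j).
     if E (vs ! i) (vs ! j)
     then sqrt (real (graph_degree V E (vs ! i)) ^ 2 + real (graph_degree V E (vs ! j)) ^ 2)
     else 0)"

definition sombor_spectrum :: "'a set \<Rightarrow> ('a \<Rightarrow> 'a \<Rightarrow> bool) \<Rightarrow> 'a list \<Rightarrow> real multiset" where
  "sombor_spectrum V E vs = proots (char_poly (sombor_matrix V E vs))"

end

theory Submission
  imports Defs
begin

text \<open>Every element of SD_8n has the same order as some power of a: a reflection a^i b
  squares to the central element a^(2ni), so it has order 2 or 4, and both divide 4n = ord a.
  As \<langle>a\<rangle> is abelian, any two vertices of different orders have commuting representatives of
  those orders, so the order super commuting graph is the complete graph on 8n vertices. Its
  Sombor matrix is (8n - 1) \<surd>2 (J - I), and the spectrum follows from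
  det (a I + b J) = (a + m b) a^(m - 1) for m \<times> m matrices.\<close>

lemma SD_mult [simp]:
  "(i, j) \<otimes>\<^bsub>SD n\<^esub> (k, l) = ((i + k * (2 * n - 1) ^ j) mod (4 * n), (j + l) mod 2)"
  by (simp add: SD_def)

lemma SD_one [simp]: "\<one>\<^bsub>SD n\<^esub> = (0, 0)"
  by (simp add: SD_def)

lemma carrier_SD: "carrier (SD n) = {..<4 * n} \<times> {..<2}"
  by (auto simp: SD_def)

lemma SD_twist_pow_mod:
  fixes n e :: nat
  assumes "n \<ge> 1"
  shows "(2 * n - 1) ^ e mod (4 * n) = (2 * n - 1) ^ (e mod 2) mod (4 * n)"
proof -
  define c where "c = 2 * n - 1"
  have "c ^ 2 = (n - 1) * (4 * n) + 1"
    using assms unfolding c_def by (cases n) (simp_all add: power2_eq_square algebra_simps)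
  then have "c ^ 2 mod (4 * n) = 1 mod (4 * n)"
    by (simp only: mod_mult_self3)
  also have "\<dots> = 1"
    using assms by simp
  finally have "c ^ 2 mod (4 * n) = 1" .
  then have "(c ^ 2) ^ (e div 2) mod (4 * n) = 1"
    using assms by (simp add: power_mod[symmetric, of "c ^ 2"])
  moreover have "c ^ e = (c ^ 2) ^ (e div 2) * c ^ (e mod 2)"
    by (metis mult_div_mod_eq power_add power_mult)
  ultimately have "c ^ e mod (4 * n) = c ^ (e mod 2) mod (4 * n)"
    by (metis mod_mult_left_eq mult_1)
  then show ?thesis
    unfolding c_def .
qed

lemma SD_mult_assoc:
  assumes "n \<ge> 1"
  shows "(i, j) \<otimes>\<^bsub>SD n\<^esub> (k, l) \<otimes>\<^bsub>SD n\<^esub> (p, q) = (i, j) \<otimes>\<^bsub>SD n\<^esub> ((k, l) \<otimes>\<^bsub>SD n\<^esub> (p, q))"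
proof -
  define c where "c = 2 * n - 1"
  have mult: "(a, b) \<otimes>\<^bsub>SD n\<^esub> (a', b') = ((a + a' * c ^ b) mod (4 * n), (b + b') mod 2)"
    for a b a' b'
    by (simp add: c_def)
  have "p * c ^ ((j + l) mod 2) mod (4 * n) = p * c ^ (j + l) mod (4 * n)"
    unfolding c_def by (metis SD_twist_pow_mod[OF assms] mod_mult_right_eq)
  then have L: "((i + k * c ^ j) mod (4 * n) + p * c ^ ((j + l) mod 2)) mod (4 * n)
      = (i + k * c ^ j + p * c ^ (j + l)) mod (4 * n)"
    by (metis mod_add_left_eq mod_add_right_eq)
  have "(i + ((k + p * c ^ l) mod (4 * n)) * c ^ j) mod (4 * n)
      = (i + (k + p * c ^ l) * c ^ j) mod (4 * n)"
    by (metis mod_add_right_eq mod_mult_left_eq)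
  also have "(k + p * c ^ l) * c ^ j = k * c ^ j + p * c ^ (j + l)"
    by (simp add: algebra_simps power_add)
  finally have R: "(i + ((k + p * c ^ l) mod (4 * n)) * c ^ j) mod (4 * n)
      = (i + k * c ^ j + p * c ^ (j + l)) mod (4 * n)"
    by (simp add: add.assoc)
  have "((j + l) mod 2 + q) mod 2 = (j + (l + q) mod 2) mod 2"
    by presburger
  then show ?thesis
    unfolding mult by (simp only: L R)
qed

lemma group_SD:
  assumes "n \<ge> 1"
  shows "group (SD n)"
proof (rule groupI)
  fix x y z
  assume "x \<in> carrier (SD n)" "y \<in> carrier (SD n)" "z \<in> carrier (SD n)"
  then obtain i j k l p q where "x = (i, j)" "y = (k, l)" "z = (p, q)"
    by (auto simp: SD_def)
  then show "x \<otimes>\<^bsub>SD n\<^esub> y \<otimes>\<^bsub>SD n\<^esub> z = x \<otimes>\<^bsub>SD n\<^esub> (y \<otimes>\<^bsub>SD n\<^esub> z)"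
    by (simp only: SD_mult_assoc[OF assms])
next
  fix x
  assume "x \<in> carrier (SD n)"
  then obtain i j where x: "x = (i, j)" "j < 2"
    by (auto simp: SD_def)
  \<comment> \<open>the inverse of a^i b^j is a^(-i (2n - 1)^j) b^j, with 4n - 1 standing for -1\<close>
  let ?y = "(i * (4 * n - 1) * (2 * n - 1) ^ j mod (4 * n), j)"
  have "i * (4 * n - 1) * (2 * n - 1) ^ j + i * (2 * n - 1) ^ j = 4 * n * (i * (2 * n - 1) ^ j)"
    using assms by (simp add: algebra_simps diff_mult_distrib2)
  then have "?y \<otimes>\<^bsub>SD n\<^esub> x = \<one>\<^bsub>SD n\<^esub>"
    using x by (simp add: mod_simps)
  moreover have "?y \<in> carrier (SD n)"
    using x assms by (simp add: SD_def)
  ultimately show "\<exists>y\<in>carrier (SD n). y \<otimes>\<^bsub>SD n\<^esub> x = \<one>\<^bsub>SD n\<^esub>"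
    by blast
qed (use assms in \<open>auto simp: SD_def\<close>)

lemma SD_rotation_pow: "(r, 0) [^]\<^bsub>SD n\<^esub> (k :: nat) = (k * r mod (4 * n), 0)"
  by (induction k) (simp_all add: mod_simps add.commute)

lemma snd_SD_mult: "snd (x \<otimes>\<^bsub>SD n\<^esub> y) = (snd x + snd y) mod 2"
  by (simp add: SD_def case_prod_beta)

lemma snd_SD_pow: "snd (x [^]\<^bsub>SD n\<^esub> (k :: nat)) = k * snd x mod 2"
  by (induction k) (simp_all add: snd_SD_mult mod_simps add.commute)

lemma SD_reflection_square:
  assumes "n \<ge> 1" and "i < 4 * n"
  shows "(i, 1) [^]\<^bsub>SD n\<^esub> (2 :: nat) = (2 * n * i mod (4 * n), 0)"
proof -
  have "i + i * (2 * n - 1) = 2 * n * i"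
    using assms(1) by (simp add: algebra_simps diff_mult_distrib2)
  then show ?thesis
    using assms(2) by (simp add: numeral_2_eq_2 mod_simps)
qed

lemma SD_rotation_pow_eq_one:
  "(r, 0) [^]\<^bsub>SD n\<^esub> (k :: nat) = \<one>\<^bsub>SD n\<^esub> \<longleftrightarrow> 4 * n dvd k * r"
  by (simp add: SD_rotation_pow dvd_eq_mod_eq_0)

lemma ord_SD_rotation:
  assumes "n \<ge> 1" and "d dvd 4 * n" and "d > 1"
  shows "group.ord (SD n) (4 * n div d, 0) = d"
proof -
  interpret SD: group "SD n"
    using group_SD[OF assms(1)] .
  obtain e where e: "4 * n = d * e"
    using assms(2) by (rule dvdE)
  have "d * e \<noteq> 0"
    using assms(1) by (simp add: e[symmetric])
  then have "d \<noteq> 0" and "e \<noteq> 0"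
    by auto
  then have "4 * n div d = e"
    by (simp add: e)
  with \<open>e \<noteq> 0\<close> have "(4 * n div d, 0) [^]\<^bsub>SD n\<^esub> k = \<one>\<^bsub>SD n\<^esub> \<longleftrightarrow> d dvd k" for k :: nat
    unfolding SD_rotation_pow_eq_one e by (simp add: mult.commute[of k])
  moreover have "(4 * n div d, 0) \<in> carrier (SD n)"
    using assms by (simp add: carrier_SD div_less_dividend)
  ultimately show ?thesis
    by (simp add: SD.ord_unique)
qed

lemma SD_reflection_pow_eq_one:
  assumes "n \<ge> 1" and "i < 4 * n"
  shows "(i, 1) [^]\<^bsub>SD n\<^esub> (k :: nat) = \<one>\<^bsub>SD n\<^esub> \<longleftrightarrow> even k \<and> even (k div 2 * i)"
proof (cases "even k")
  case True
  interpret SD: group "SD n"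
    using group_SD[OF assms(1)] .
  have "(i, 1) [^]\<^bsub>SD n\<^esub> k = ((i, 1) [^]\<^bsub>SD n\<^esub> (2 :: nat)) [^]\<^bsub>SD n\<^esub> (k div 2)"
    using True assms by (simp add: SD.nat_pow_pow carrier_SD)
  also have "\<dots> = (k div 2 * (2 * n * i) mod (4 * n), 0)"
    by (simp only: SD_reflection_square[OF assms]) (simp add: SD_rotation_pow mod_simps)
  finally have "(i, 1) [^]\<^bsub>SD n\<^esub> k = \<one>\<^bsub>SD n\<^esub> \<longleftrightarrow> 4 * n dvd k div 2 * (2 * n * i)"
    by (simp only: SD_one prod.inject dvd_eq_mod_eq_0 simp_thms)
  also have "\<dots> \<longleftrightarrow> 2 * n * 2 dvd 2 * n * (k div 2 * i)"
    by (simp add: algebra_simps)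
  also have "\<dots> \<longleftrightarrow> even (k div 2 * i)"
    using assms(1) by (simp only: nat_mult_dvd_cancel1)
  finally show ?thesis
    using True by simp
next
  case False
  then have "snd ((i, 1) [^]\<^bsub>SD n\<^esub> k) \<noteq> 0"
    by (simp add: snd_SD_pow odd_iff_mod_2_eq_one)
  then show ?thesis
    using False by auto
qed

lemma ord_SD_reflection:
  assumes "n \<ge> 1" and "i < 4 * n"
  shows "group.ord (SD n) (i, 1) = (if even i then 2 else 4)"
proof -
  interpret SD: group "SD n"
    using group_SD[OF assms(1)] .
  have "(i, 1) [^]\<^bsub>SD n\<^esub> k = \<one>\<^bsub>SD n\<^esub> \<longleftrightarrow> (if even i then 2 else 4) dvd k"
    for k :: nat
    unfolding SD_reflection_pow_eq_one[OF assms]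
    by (cases "even i") (auto elim!: evenE)
  moreover have "(i, 1) \<in> carrier (SD n)"
    using assms by (simp add: carrier_SD)
  ultimately show ?thesis
    by (simp add: SD.ord_unique)
qed

lemma SD_ord_eq_rotation_ord:
  assumes "n \<ge> 1" and "x \<in> carrier (SD n)"
  shows "\<exists>r < 4 * n. group.ord (SD n) (r, 0) = group.ord (SD n) x"
proof -
  obtain i j where x: "x = (i, j)" "i < 4 * n" "j < 2"
    using assms(2) by (auto simp: carrier_SD)
  have rot: "group.ord (SD n) (4 * n div d, 0) = d" if "d \<in> {2, 4}" for d
    using that assms(1) by (auto intro!: ord_SD_rotation)
  show ?thesis
  proof (cases "j = 0")
    case True
    then show ?thesis
      using x by auto
  next
    case False
    then have "x = (i, 1)"
      using x by simp
    then obtain d where "d \<in> {2, 4}" and "group.ord (SD n) x = d"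
      using ord_SD_reflection[OF assms(1) x(2)] by (cases "even i") auto
    then show ?thesis
      using rot[of d] assms(1) by (intro exI[of _ "4 * n div d"]) auto
  qed
qed

lemma order_super_commuting_adj_complete:
  assumes "A \<subseteq> carrier G"
    and "\<And>a b. a \<in> A \<Longrightarrow> b \<in> A \<Longrightarrow> a \<otimes>\<^bsub>G\<^esub> b = b \<otimes>\<^bsub>G\<^esub> a"
    and "\<And>g. g \<in> carrier G \<Longrightarrow> \<exists>a \<in> A. group.ord G a = group.ord G g"
  shows "order_super_commuting_adj G g h \<longleftrightarrow> g \<in> carrier G \<and> h \<in> carrier G \<and> g \<noteq> h"
proof
  assume gh: "g \<in> carrier G \<and> h \<in> carrier G \<and> g \<noteq> h"
  show "order_super_commuting_adj G g h"
  proof (cases "group.ord G g = group.ord G h")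
    case True
    then show ?thesis
      using gh by (simp add: order_super_commuting_adj_def)
  next
    case False
    obtain a b where ab: "a \<in> A" "b \<in> A"
      and ord_a: "group.ord G a = group.ord G g" and ord_b: "group.ord G b = group.ord G h"
      using assms(3) gh by meson
    then have "a \<noteq> b" and "a \<otimes>\<^bsub>G\<^esub> b = b \<otimes>\<^bsub>G\<^esub> a"
      using False assms(2) by auto
    with ab ord_a ord_b gh assms(1) show ?thesis
      unfolding order_super_commuting_adj_def by (intro conjI disjI2 bexI[of _ a] bexI[of _ b]) auto
  qed
qed (simp add: order_super_commuting_adj_def)

lemma order_super_commuting_adj_SD:
  assumes "n \<ge> 1"
  shows "order_super_commuting_adj (SD n) g h \<longleftrightarrow>
    g \<in> carrier (SD n) \<and> h \<in> carrier (SD n) \<and> g \<noteq> h"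
proof (rule order_super_commuting_adj_complete)
  show "{..<4 * n} \<times> {0} \<subseteq> carrier (SD n)"
    by (auto simp: carrier_SD)
  show "a \<otimes>\<^bsub>SD n\<^esub> b = b \<otimes>\<^bsub>SD n\<^esub> a" if "a \<in> {..<4 * n} \<times> {0}" "b \<in> {..<4 * n} \<times> {0}" for a b
    using that by (auto simp: add.commute)
  show "\<exists>a \<in> {..<4 * n} \<times> {0}. group.ord (SD n) a = group.ord (SD n) g" if "g \<in> carrier (SD n)" for g
    using SD_ord_eq_rotation_ord[OF assms that] by auto
qed

lemma det_unit_lower_triangular:
  assumes "L \<in> carrier_mat m m"
    and "\<And>i j. i < j \<Longrightarrow> j < m \<Longrightarrow> L $$ (i, j) = 0"
    and "\<And>i. i < m \<Longrightarrow> L $$ (i, i) = 1"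
  shows "det L = 1"
  using assms by (simp add: det_lower_triangular[of m] prod_list_diag_prod)

lemma mult_mat_sum_columns_into_first:
  fixes A :: "'a :: comm_ring_1 mat"
  assumes "A \<in> carrier_mat n m"
  shows "A * mat m m (\<lambda>(i, j). of_bool (i = j \<or> j = 0)) =
    mat n m (\<lambda>(i, j). if j = 0 then (\<Sum>k<m. A $$ (i, k)) else A $$ (i, j))" (is "?AC = ?B")
proof (rule eq_matI)
  fix i j
  assume ij: "i < dim_row ?B" "j < dim_col ?B"
  then have "?AC $$ (i, j) =
      (\<Sum>k<m. A $$ (i, k) * of_bool (k = j \<or> j = 0))"
    using assms by (simp add: scalar_prod_def lessThan_atLeast0)
  also have "\<dots> = (if j = 0 then (\<Sum>k<m. A $$ (i, k)) else A $$ (i, j))"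
  proof -
    have "{k. k = j \<and> k < m} = {j}"
      using ij by auto
    then show ?thesis
      by (simp add: Int_def lessThan_def)
  qed
  finally show "?AC $$ (i, j) = ?B $$ (i, j)"
    using ij by simp
qed (use assms in simp_all)

lemma mult_mat_subtract_first_row:
  fixes A :: "'a :: comm_ring_1 mat"
  assumes "A \<in> carrier_mat n m"
  shows "mat n n (\<lambda>(i, j). of_bool (i = j) - of_bool (j = 0 \<and> i \<noteq> 0)) * A =
    mat n m (\<lambda>(i, j). if i = 0 then A $$ (0, j) else A $$ (i, j) - A $$ (0, j))" (is "?RA = ?B")
proof (rule eq_matI)
  fix i j
  assume ij: "i < dim_row ?B" "j < dim_col ?B"
  then have "{k. k = i \<and> k < n} = {i}" and "{k. k = 0 \<and> k < n} = {0}"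
    by auto
  then show "?RA $$ (i, j) = ?B $$ (i, j)"
    using ij assms
    by (simp add: scalar_prod_def lessThan_atLeast0 left_diff_distrib sum_subtractf Int_def)
qed (use assms in simp_all)

lemma det_first_row_plus_diagonal:
  fixes a :: "'a :: comm_ring_1"
  assumes "m \<ge> 1"
  shows "det (mat m m (\<lambda>(i, j). if i = 0 then f j else if i = j then a else 0)) = f 0 * a ^ (m - 1)"
proof -
  obtain m' where m': "m = Suc m'"
    using assms by (cases m) auto
  have "det (mat m m (\<lambda>(i, j). if i = 0 then f j else if i = j then a else 0)) =
      (\<Prod>i<m. if i = 0 then f i else a)"
    by (auto simp: det_upper_triangular[of _ m] upper_triangular_def prod_list_diag_prod
        lessThan_atLeast0 intro!: prod.cong)
  also have "\<dots> = f 0 * a ^ (m - 1)"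
    unfolding m' by (simp only: prod.lessThan_Suc_shift) simp
  finally show ?thesis .
qed

lemma det_diagonal_plus_constant:
  fixes a b :: "'a :: comm_ring_1"
  assumes "m \<ge> 1"
  shows "det (mat m m (\<lambda>(i, j). if i = j then a + b else b)) = (a + of_nat m * b) * a ^ (m - 1)"
proof -
  define M where "M = mat m m (\<lambda>(i, j). if i = j then a + b else b)"
  define C :: "'a mat" where "C = mat m m (\<lambda>(i, j). of_bool (i = j \<or> j = 0))"
  define R :: "'a mat" where "R = mat m m (\<lambda>(i, j). of_bool (i = j) - of_bool (j = 0 \<and> i \<noteq> 0))"
  have "det R = 1" and "det C = 1"
    by (auto simp: R_def C_def intro!: det_unit_lower_triangular)
  moreover have M: "M \<in> carrier_mat m m" and "C \<in> carrier_mat m m" and "R \<in> carrier_mat m m"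
    by (simp_all add: M_def C_def R_def)
  ultimately have "det M = det (R * (M * C))"
    by (simp add: det_mult[of _ m])
  also have "R * (M * C) =
      mat m m (\<lambda>(i, j). if i = 0 then (if j = 0 then a + of_nat m * b else b) else if i = j then a else 0)"
  proof -
    have "(\<Sum>k<m. if i = k then a + b else b) = a + of_nat m * b"
      and "(\<Sum>k<m. if k = i then a + b else b) = a + of_nat m * b" if "i < m" for i
    proof -
      have "(\<Sum>k<m. if i = k then a + b else b) = (\<Sum>k<m. b + (if i = k then a else 0))"
        by (rule sum.cong) auto
      then show "(\<Sum>k<m. if i = k then a + b else b) = a + of_nat m * b"
        using that by (simp add: sum.distrib)
      then show "(\<Sum>k<m. if k = i then a + b else b) = a + of_nat m * b"
        by (simp add: eq_commute)
    qed
    then show ?thesis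
      unfolding C_def R_def mult_mat_sum_columns_into_first[OF M]
      by (subst mult_mat_subtract_first_row) (auto simp: M_def)
  qed
  finally have "det M = det (mat m m (\<lambda>(i, j).
      if i = 0 then (if j = 0 then a + of_nat m * b else b) else if i = j then a else 0))" .
  then show ?thesis
    using det_first_row_plus_diagonal[OF assms, of "\<lambda>j. if j = 0 then a + of_nat m * b else b" a]
    by (simp add: M_def)
qed

lemma proots_char_poly_constant_off_diagonal:
  fixes c :: "'a :: idom"
  assumes "m \<ge> 1"
  shows "proots (char_poly (mat m m (\<lambda>(i, j). if i = j then 0 else c))) =
    replicate_mset (m - 1) (- c) + {# (of_nat m - 1) * c #}"
proof -
  define r where "r = (of_nat m - 1) * c"
  have "char_poly_matrix (mat m m (\<lambda>(i, j). if i = j then 0 else c)) =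
      mat m m (\<lambda>(i, j). if i = j then [:c, 1:] + [:- c:] else [:- c:])"
    by (rule eq_matI) (auto simp: char_poly_matrix_def)
  then have "char_poly (mat m m (\<lambda>(i, j). if i = j then 0 else c)) =
      ([:c, 1:] + of_nat m * [:- c:]) * [:c, 1:] ^ (m - 1)"
    unfolding char_poly_def by (simp only: det_diagonal_plus_constant[OF assms])
  also have "[:c, 1:] + of_nat m * [:- c:] = [:- r, 1:]"
    by (simp add: r_def of_nat_poly algebra_simps)
  also have "proots ([:- r, 1:] * [:c, 1:] ^ (m - 1)) = proots [:- r, 1:] + proots ([:c, 1:] ^ (m - 1))"
    by (rule proots_mult) simp_all
  also have "\<dots> = {# r #} + repeat_mset (m - 1) {# - c #}"
    by (simp only: proots_linear_factor proots_power minus_minus)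
  finally show ?thesis
    by (simp add: r_def add.commute)
qed

lemma sombor_matrix_complete_graph:
  assumes adj: "\<And>u v. E u v \<longleftrightarrow> u \<in> V \<and> v \<in> V \<and> u \<noteq> v"
    and "distinct vs" and "set vs = V"
  shows "sombor_matrix V E vs =
    mat (card V) (card V) (\<lambda>(i, j). if i = j then 0 else (real (card V) - 1) * sqrt 2)"
    (is "_ = ?S")
proof -
  have len: "length vs = card V"
    using assms(2,3) distinct_card by fastforce
  have deg: "graph_degree V E u = card V - 1" if "u \<in> V" for u
  proof -
    have "{v \<in> V. E u v} = V - {u}"
      using that adj by auto
    then show ?thesis
      unfolding graph_degree_def using that assms(3) by auto
  qed
  have entry: "sqrt (real (card V - 1) ^ 2 + real (card V - 1) ^ 2) = (real (card V) - 1) * sqrt 2"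
    if "card V \<ge> 1"
    using that by (simp add: of_nat_diff real_sqrt_mult flip: mult_2)
  show ?thesis
  proof (rule eq_matI)
    fix i j
    assume "i < dim_row ?S" and "j < dim_col ?S"
    then have i: "i < length vs" and j: "j < length vs"
      by (simp_all add: len)
    then have "vs ! i \<in> V" and "vs ! j \<in> V"
      using assms(3) nth_mem by blast+
    moreover have "vs ! i = vs ! j \<longleftrightarrow> i = j"
      using assms(2) i j by (simp add: nth_eq_iff_index_eq)
    moreover have "card V \<ge> 1"
      using i len by simp
    ultimately show "sombor_matrix V E vs $$ (i, j) = ?S $$ (i, j)"
      using i j entry unfolding sombor_matrix_def by (simp add: adj deg len)
  qed (simp_all add: sombor_matrix_def len)
qed

lemma sombor_spectrum_complete_graph:
  assumes "\<And>u v. E u v \<longleftrightarrow> u \<in> V \<and> v \<in> V \<and> u \<noteq> v"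
    and "distinct vs" and "set vs = V" and "V \<noteq> {}"
  shows "sombor_spectrum V E vs =
    replicate_mset (card V - 1) (- (real (card V) - 1) * sqrt 2) + {# (real (card V) - 1) ^ 2 * sqrt 2 #}"
proof -
  have "card V \<ge> 1"
    using assms(3,4) by (metis List.finite_set card_0_eq less_one not_le)
  then show ?thesis
    unfolding sombor_spectrum_def sombor_matrix_complete_graph[OF assms(1-3)]
    by (simp add: proots_char_poly_constant_off_diagonal power2_eq_square algebra_simps)
qed

lemma card_carrier_SD: "card (carrier (SD n)) = 8 * n"
  by (simp add: carrier_SD card_cartesian_product)

theorem corollary4p6:
  fixes n :: nat and vs :: "(nat \<times> nat) list"
  assumes "n \<ge> 2"
    and "distinct vs" and "set vs = carrier (SD n)"
  shows "sombor_spectrum (carrier (SD n)) (order_super_commuting_adj (SD n)) vs =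
           replicate_mset (8 * n - 1) (- (real (8 * n) - 1) * sqrt 2)
           + {# (real (8 * n) - 1) ^ 2 * sqrt 2 #}"
proof -
  have "n \<ge> 1"
    using assms(1) by simp
  moreover from this have "carrier (SD n) \<noteq> {}"
    by (simp add: carrier_SD lessThan_empty_iff)
  ultimately show ?thesis
    using sombor_spectrum_complete_graph[OF order_super_commuting_adj_SD assms(2,3)]
    by (simp add: card_carrier_SD)
qed

end
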